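(* Let $0<\alpha\leqslant1$. Define functions on $[1,\infty)$ recursively by $f_0(x)\equiv1$ and, for $k\geqslant0$, $$f_{k+1}(x)=\max\{y\in(0,1]:\ F_k(y)=\alpha x\},\qquad F_k(y)=\frac1y-y-\frac{1-\alpha}{f_k(1/y)}+f_k(1/y)\quad(0<y\leqslant1).$$ Then the sequence $\{f_k\}$ is well defined and: (a) for every $k\geqslant1$, $f_k$ is a strictly decreasing smooth function on $[1,\infty)$ with $f_k(1)=1$, $\lim_{x\to\infty}f_k(x)=0$, and $f_k(x)>1/x$ for all $x>1$; (b) for every $k\geqslant0$, $F_k$ is a strictly decreasing smooth function on $(0,1]$ with $\lim_{y\to0^+}F_k(y)=\infty$ and $F_k(1)=\alpha$; (c) for all $k\geqslant0$ and $x>1$, $f_{k+1}(x)<f_k(x)$; (d) $\{f_k\}$ converges pointwise on $[1,\infty)$ to $$f_\infty(x)=\max\left\{\frac1x,\ \frac12\left(\alpha(2-x)+\sqrt{\alpha^2(2-x)^2+4(1-\alpha)}\right)\right\}.$$ *)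

theory Defs
  imports "HOL-Analysis.Analysis"
begin

text \<open>For S = [1,\<infinity>) this uses one-sided derivatives at the endpoint.\<close>
definition smooth_on :: "real set \<Rightarrow> (real \<Rightarrow> real) \<Rightarrow> bool" where
  "smooth_on S f \<longleftrightarrow> (\<exists>D :: nat \<Rightarrow> real \<Rightarrow> real. D 0 = f \<and>
      (\<forall>n. \<forall>x\<in>S. (D n has_real_derivative D (Suc n) x) (at x within S)))"

primrec fseq :: "real \<Rightarrow> nat \<Rightarrow> real \<Rightarrow> real" where
  "fseq a 0 = (\<lambda>x. 1)"
| "fseq a (Suc k) = (\<lambda>x. GREATEST y. 0 < y \<and> y \<le> 1 \<and>
      1 / y - y - (1 - a) / fseq a k (1 / y) + fseq a k (1 / y) = a * x)"

definition Fseq :: "real \<Rightarrow> nat \<Rightarrow> real \<Rightarrow> real" where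
  "Fseq a k y = 1 / y - y - (1 - a) / fseq a k (1 / y) + fseq a k (1 / y)"

lemma fseq_Suc: "fseq a (Suc k) x = (GREATEST y. 0 < y \<and> y \<le> 1 \<and> Fseq a k y = a * x)"
  by (simp add: Fseq_def)

definition finf :: "real \<Rightarrow> real \<Rightarrow> real" where
  "finf a x = max (1 / x) ((a * (2 - x) + sqrt (a\<^sup>2 * (2 - x)\<^sup>2 + 4 * (1 - a))) / 2)"

end

theory Submission
  imports Defs
begin

(* Write g(t) = t - (1 - a)/t and H_k(t) = a t + g(f_k(t)). Then F_k(y) = H_k(1/y) - g(y), so
   F_k is strictly decreasing on (0,1] as long as H_k is non-decreasing on [1,oo); F_k(1) = a and
   F_k(y) >= a/y then make f_{k+1} the inverse function of F_k / a, with values in [1/x, 1].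
   The identity H_{k+1}(x) = H_k(1 / f_{k+1}(x)) passes the monotonicity of H_k on to H_{k+1},
   so (a)-(c) follow by induction on k; smoothness comes from the inverse function theorem,
   since F_k + id is non-increasing and hence F_k' <= -1.
   For (d), f_k decreases to a limit f, and H = lim H_k satisfies H(x) = H(1 / f(x)). Taking
   the infimum q of the level set of H through x gives H(x) <= a q + g(1/q), and convexity of
   t -> a t + g(1/t) on [1,x] bounds this by max(2a, a x + g(1/x)), which is also a lower bound.
   Solving g(f(x)) = max(a(2 - x), g(1/x)) for f(x) yields the closed form. *)

section \<open>Smooth functions\<close>

lemma smooth_on_iff_derivative:
  "smooth_on S f \<longleftrightarrow>
    (\<exists>f'. (\<forall>x\<in>S. (f has_real_derivative f' x) (at x within S)) \<and> smooth_on S f')"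
proof
  assume "smooth_on S f"
  then obtain D where D: "D 0 = f" "\<forall>n. \<forall>x\<in>S. (D n has_real_derivative D (Suc n) x) (at x within S)"
    unfolding smooth_on_def by blast
  then have "smooth_on S (D 1)"
    unfolding smooth_on_def by (intro exI[of _ "\<lambda>n. D (Suc n)"]) auto
  with D show "\<exists>f'. (\<forall>x\<in>S. (f has_real_derivative f' x) (at x within S)) \<and> smooth_on S f'"
    by auto
next
  assume "\<exists>f'. (\<forall>x\<in>S. (f has_real_derivative f' x) (at x within S)) \<and> smooth_on S f'"
  then obtain f' D where "\<forall>x\<in>S. (f has_real_derivative f' x) (at x within S)" "D 0 = f'"
    "\<forall>n. \<forall>x\<in>S. (D n has_real_derivative D (Suc n) x) (at x within S)"
    unfolding smooth_on_def by blast
  then show "smooth_on S f"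
    unfolding smooth_on_def by (intro exI[of _ "case_nat f D"]) (auto split: nat.split)
qed

lemma smooth_on_derivativeI:
  "(\<And>x. x \<in> S \<Longrightarrow> (f has_real_derivative f' x) (at x within S)) \<Longrightarrow> smooth_on S f' \<Longrightarrow>
    smooth_on S f"
  unfolding smooth_on_iff_derivative[of S f] by blast

lemma smooth_on_coinduct:
  assumes "X f"
    and step: "\<And>g. X g \<Longrightarrow> \<exists>g'. (\<forall>x\<in>S. (g has_real_derivative g' x) (at x within S)) \<and> X g'"
  shows "smooth_on S f"
proof -
  obtain d where d: "\<And>g. X g \<Longrightarrow> (\<forall>x\<in>S. (g has_real_derivative d g x) (at x within S)) \<and> X (d g)"
    using step by metis
  have X: "X ((d ^^ n) f)" for n
    by (induction n) (simp_all add: assms(1) d)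
  have "((d ^^ n) f has_real_derivative (d ^^ Suc n) f x) (at x within S)" if "x \<in> S" for n x
    using d[OF X[of n]] that by simp
  then show ?thesis
    unfolding smooth_on_def by (intro exI[of _ "\<lambda>n. (d ^^ n) f"]) simp
qed

lemma smooth_on_continuous:
  assumes "smooth_on S f"
  shows "continuous_on S f"
proof -
  from assms obtain f' where "\<forall>x\<in>S. (f has_real_derivative f' x) (at x within S)"
    unfolding smooth_on_iff_derivative[of S f] by blast
  then show ?thesis
    unfolding continuous_on_eq_continuous_within by (blast intro: DERIV_continuous)
qed

lemma smooth_on_cong:
  assumes "smooth_on S f" and "\<And>x. x \<in> S \<Longrightarrow> f x = g x"
  shows "smooth_on S g"
proof -
  from assms(1) obtain f' where f': "\<forall>x\<in>S. (f has_real_derivative f' x) (at x within S)"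
    and "smooth_on S f'"
    unfolding smooth_on_iff_derivative[of S f] by blast
  have "(g has_real_derivative f' x) (at x within S)" if "x \<in> S" for x
    by (rule has_field_derivative_transform_within[OF f'[rule_format, OF that], where d=1])
       (use that assms(2) in auto)
  then show ?thesis using \<open>smooth_on S f'\<close> by (rule smooth_on_derivativeI)
qed

inductive generated_algebra :: "((real \<Rightarrow> real) \<Rightarrow> bool) \<Rightarrow> (real \<Rightarrow> real) \<Rightarrow> bool"
  for B where
  generated_algebra_base: "B f \<Longrightarrow> generated_algebra B f"
| generated_algebra_const: "generated_algebra B (\<lambda>x. c)"
| generated_algebra_add:
    "generated_algebra B f \<Longrightarrow> generated_algebra B g \<Longrightarrow> generated_algebra B (\<lambda>x. f x + g x)"
| generated_algebra_mult:
    "generated_algebra B f \<Longrightarrow> generated_algebra B g \<Longrightarrow> generated_algebra B (\<lambda>x. f x * g x)"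

text \<open>The product rule keeps derivatives inside the algebra, so it suffices that the generators
  have derivatives in it.\<close>
lemma smooth_on_generated_algebra:
  assumes base: "\<And>f. B f \<Longrightarrow>
      \<exists>f'. (\<forall>x\<in>S. (f has_real_derivative f' x) (at x within S)) \<and> generated_algebra B f'"
    and "generated_algebra B f"
  shows "smooth_on S f"
proof (rule smooth_on_coinduct[where X = "generated_algebra B"])
  show "generated_algebra B f" by (rule assms(2))
next
  fix g assume "generated_algebra B g"
  then show "\<exists>g'. (\<forall>x\<in>S. (g has_real_derivative g' x) (at x within S)) \<and> generated_algebra B g'"
  proof induction
    case (generated_algebra_base f)
    then show ?case by (rule base)
  next
    case (generated_algebra_const c)
    show ?case
      by (intro exI[of _ "\<lambda>x. 0"]) (auto intro: generated_algebra.generated_algebra_const)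
  next
    case (generated_algebra_add f g)
    then obtain f' g' where "\<forall>x\<in>S. (f has_real_derivative f' x) (at x within S)"
      "\<forall>x\<in>S. (g has_real_derivative g' x) (at x within S)"
      "generated_algebra B f'" "generated_algebra B g'" by blast
    then show ?case
      by (intro exI[of _ "\<lambda>x. f' x + g' x"])
         (auto intro: DERIV_add generated_algebra.generated_algebra_add)
  next
    case (generated_algebra_mult f g)
    then obtain f' g' where "\<forall>x\<in>S. (f has_real_derivative f' x) (at x within S)"
      "\<forall>x\<in>S. (g has_real_derivative g' x) (at x within S)"
      "generated_algebra B f'" "generated_algebra B g'" by blast
    with generated_algebra_mult.hyps show ?case
      by (intro exI[of _ "\<lambda>x. f' x * g x + g' x * f x"])
         (auto intro: DERIV_mult generated_algebra.generated_algebra_add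
           generated_algebra.generated_algebra_mult)
  qed
qed

lemma smooth_on_generated_algebra_smooth:
  "generated_algebra (smooth_on S) f \<Longrightarrow> smooth_on S f"
  by (rule smooth_on_generated_algebra[where B = "smooth_on S"])
     (use smooth_on_iff_derivative in \<open>blast intro: generated_algebra_base\<close>)

lemma smooth_on_const: "smooth_on S (\<lambda>x. c)"
  by (rule smooth_on_generated_algebra_smooth, rule generated_algebra_const)

lemma smooth_on_add: "smooth_on S f \<Longrightarrow> smooth_on S g \<Longrightarrow> smooth_on S (\<lambda>x. f x + g x)"
  by (rule smooth_on_generated_algebra_smooth, rule generated_algebra_add; rule generated_algebra_base)

lemma smooth_on_mult: "smooth_on S f \<Longrightarrow> smooth_on S g \<Longrightarrow> smooth_on S (\<lambda>x. f x * g x)"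
  by (rule smooth_on_generated_algebra_smooth, rule generated_algebra_mult; rule generated_algebra_base)

lemma smooth_on_diff: "smooth_on S f \<Longrightarrow> smooth_on S g \<Longrightarrow> smooth_on S (\<lambda>x. f x - g x)"
  by (rule smooth_on_cong[OF smooth_on_add[OF _ smooth_on_mult[OF smooth_on_const[of S "-1"]]]]) auto

lemma smooth_on_id: "smooth_on S (\<lambda>x. x)"
  by (rule smooth_on_derivativeI[OF _ smooth_on_const]) (rule DERIV_ident)

lemma smooth_on_divide:
  assumes f: "smooth_on S f" and h: "smooth_on S h" and nz: "\<And>x. x \<in> S \<Longrightarrow> h x \<noteq> 0"
  shows "smooth_on S (\<lambda>x. f x / h x)"
proof -
  let ?B = "\<lambda>g. smooth_on S g \<or> g = (\<lambda>x. 1 / h x)"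
  have "\<exists>g'. (\<forall>x\<in>S. (g has_real_derivative g' x) (at x within S)) \<and> generated_algebra ?B g'"
    if "?B g" for g
    using that
  proof
    assume "smooth_on S g"
    then show ?thesis using smooth_on_iff_derivative[of S g] by (blast intro: generated_algebra_base)
  next
    assume g: "g = (\<lambda>x. 1 / h x)"
    from h obtain h' where dh: "\<And>x. x \<in> S \<Longrightarrow> (h has_real_derivative h' x) (at x within S)"
      and "smooth_on S h'"
      unfolding smooth_on_iff_derivative[of S h] by blast
    then have "generated_algebra ?B (\<lambda>x. -1 * h' x * g x * g x)"
      using g by (intro generated_algebra_mult generated_algebra_const generated_algebra_base) auto
    moreover have "(g has_real_derivative -1 * h' x * g x * g x) (at x within S)" if "x \<in> S" for x
    proof -
      have "((\<lambda>x. 1 / h x) has_real_derivative (0 * h x - 1 * h' x) / (h x * h x)) (at x within S)"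
        by (rule DERIV_divide[OF DERIV_const dh[OF that] nz[OF that]])
      then show ?thesis unfolding g by simp
    qed
    ultimately show ?thesis by (intro exI[of _ "\<lambda>x. -1 * h' x * g x * g x"]) blast
  qed
  moreover have "generated_algebra ?B (\<lambda>x. f x * (1 / h x))"
    using f by (intro generated_algebra_mult generated_algebra_base) auto
  ultimately show ?thesis
    using smooth_on_generated_algebra[of ?B S "\<lambda>x. f x * (1 / h x)"] by simp
qed

text \<open>Composition with a solution \<open>u\<close> of an autonomous equation \<open>u' = w \<circ> u\<close>: the derivative of
  \<open>\<phi> \<circ> u\<close> is again of the form \<open>\<psi> \<circ> u\<close> with \<open>\<psi> = \<phi>' * w\<close> smooth.\<close>
lemma smooth_on_compose_ode:
  assumes u: "\<And>x. x \<in> S \<Longrightarrow> u x \<in> T"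
    and du: "\<And>x. x \<in> S \<Longrightarrow> (u has_real_derivative w (u x)) (at x within S)"
    and w: "smooth_on T w" and \<phi>: "smooth_on T \<phi>"
  shows "smooth_on S (\<lambda>x. \<phi> (u x))"
proof (rule smooth_on_coinduct[where X = "\<lambda>g. \<exists>\<psi>. smooth_on T \<psi> \<and> g = (\<lambda>x. \<psi> (u x))"])
  fix g assume "\<exists>\<psi>. smooth_on T \<psi> \<and> g = (\<lambda>x. \<psi> (u x))"
  then obtain \<psi> where \<psi>: "smooth_on T \<psi>" and g: "g = (\<lambda>x. \<psi> (u x))" by blast
  from \<psi> obtain \<psi>' where d\<psi>: "\<And>t. t \<in> T \<Longrightarrow> (\<psi> has_real_derivative \<psi>' t) (at t within T)"
    and "smooth_on T \<psi>'"
    unfolding smooth_on_iff_derivative[of T \<psi>] by blast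
  show "\<exists>g'. (\<forall>x\<in>S. (g has_real_derivative g' x) (at x within S)) \<and>
      (\<exists>\<psi>. smooth_on T \<psi> \<and> g' = (\<lambda>x. \<psi> (u x)))"
  proof (intro exI conjI ballI)
    fix x assume x: "x \<in> S"
    have "(\<psi> has_real_derivative \<psi>' (u x)) (at (u x) within u ` S)"
      using d\<psi>[OF u[OF x]] u by (auto intro: DERIV_subset)
    from DERIV_image_chain[OF this du[OF x]]
    show "(g has_real_derivative \<psi>' (u x) * w (u x)) (at x within S)" by (simp add: g o_def)
  next
    show "smooth_on T (\<lambda>t. \<psi>' t * w t)" using \<open>smooth_on T \<psi>'\<close> w by (rule smooth_on_mult)
  qed simp
qed (use \<phi> in blast)

lemma has_real_derivative_inverse_within:
  fixes G u :: "real \<Rightarrow> real"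
  assumes G: "(G has_real_derivative D) (at (u y) within T)" and D: "D \<noteq> 0"
    and uT: "\<And>z. z \<in> S \<Longrightarrow> u z \<in> T" and Gu: "\<And>z. z \<in> S \<Longrightarrow> G (u z) = z"
    and y: "y \<in> S" and cont: "continuous (at y within S) u"
  shows "(u has_real_derivative inverse D) (at y within S)"
proof -
  have q: "((\<lambda>w. (G w - G (u y)) / (w - u y)) \<longlongrightarrow> D) (at (u y) within T)"
    using G by (simp add: has_field_derivative_iff)
  have "eventually (\<lambda>z. u z \<in> T \<and> u z \<noteq> u y) (at y within S)"
    unfolding eventually_at_filter
  proof (rule always_eventually, intro allI impI conjI)
    fix z assume "z \<noteq> y" "z \<in> S"
    then show "u z \<in> T" and "u z \<noteq> u y" using uT Gu[OF \<open>z \<in> S\<close>] Gu[OF y] by metis+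
  qed
  then have "filterlim u (at (u y) within T) (at y within S)"
    using cont unfolding filterlim_at continuous_within by blast
  from filterlim_compose[OF q this]
  have "((\<lambda>z. inverse ((G (u z) - G (u y)) / (u z - u y))) \<longlongrightarrow> inverse D) (at y within S)"
    using D by (intro tendsto_inverse) auto
  moreover have "eventually (\<lambda>z. inverse ((G (u z) - G (u y)) / (u z - u y)) = (u z - u y) / (z - y))
      (at y within S)"
    unfolding eventually_at_filter by (rule always_eventually) (simp add: Gu y)
  ultimately have "((\<lambda>z. (u z - u y) / (z - y)) \<longlongrightarrow> inverse D) (at y within S)"
    by (rule Lim_transform_eventually)
  then show ?thesis by (simp add: has_field_derivative_iff)
qed

text \<open>Here \<open>u' = (1 / G') \<circ> u\<close>, the case \<open>\<phi> = id\<close> of \<open>smooth_on_compose_ode\<close>.\<close>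
lemma smooth_on_inverse_function:
  assumes G': "smooth_on T G'" and dG: "\<And>t. t \<in> T \<Longrightarrow> (G has_real_derivative G' t) (at t within T)"
    and nz: "\<And>t. t \<in> T \<Longrightarrow> G' t \<noteq> 0"
    and uT: "\<And>x. x \<in> S \<Longrightarrow> u x \<in> T" and Gu: "\<And>x. x \<in> S \<Longrightarrow> G (u x) = x"
    and cont: "continuous_on S u"
  shows "smooth_on S u"
proof -
  have "(u has_real_derivative 1 / G' (u x)) (at x within S)" if "x \<in> S" for x
    using has_real_derivative_inverse_within[OF dG[OF uT] nz[OF uT] uT Gu] cont that
    by (simp add: continuous_on_eq_continuous_within divide_inverse)
  moreover have "smooth_on T (\<lambda>t. 1 / G' t)"
    using smooth_on_const G' nz by (rule smooth_on_divide)
  ultimately show ?thesis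
    using smooth_on_compose_ode[where w = "\<lambda>t. 1 / G' t" and \<phi> = "\<lambda>t. t", OF uT] smooth_on_id
    by simp
qed

lemma decreasing_imp_DERIV_nonpos:
  fixes f :: "real \<Rightarrow> real"
  assumes "(f has_real_derivative D) (at x within S)" and "at x within S \<noteq> bot" and "x \<in> S"
    and dec: "\<And>y z. y \<in> S \<Longrightarrow> z \<in> S \<Longrightarrow> y \<le> z \<Longrightarrow> f z \<le> f y"
  shows "D \<le> 0"
proof (rule tendsto_upperbound)
  show "((\<lambda>y. (f y - f x) / (y - x)) \<longlongrightarrow> D) (at x within S)"
    using assms(1) by (simp add: has_field_derivative_iff)
  show "eventually (\<lambda>y. (f y - f x) / (y - x) \<le> 0) (at x within S)"
    unfolding eventually_at_filter
  proof (rule always_eventually, intro allI impI)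
    fix y assume "y \<noteq> x" "y \<in> S"
    then consider "y < x" "f x \<le> f y" | "x < y" "f y \<le> f x"
      using dec[OF \<open>y \<in> S\<close> \<open>x \<in> S\<close>] dec[OF \<open>x \<in> S\<close> \<open>y \<in> S\<close>] by fastforce
    then show "(f y - f x) / (y - x) \<le> 0"
      by cases (auto intro: divide_nonneg_neg divide_nonpos_pos)
  qed
qed (rule assms(2))

section \<open>The recursion step\<close>

declare fseq.simps(2) [simp del]

definition gfun :: "real \<Rightarrow> real \<Rightarrow> real" where
  "gfun a t = t - (1 - a) / t"

definition gfun_root :: "real \<Rightarrow> real \<Rightarrow> real" where
  "gfun_root a b = (b + sqrt (b\<^sup>2 + 4 * (1 - a))) / 2"

definition Hseq :: "real \<Rightarrow> nat \<Rightarrow> real \<Rightarrow> real" where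
  "Hseq a k t = a * t + gfun a (fseq a k t)"

lemma gfun_1 [simp]: "gfun a 1 = a"
  by (simp add: gfun_def)

lemma strict_mono_on_gfun: "a \<le> 1 \<Longrightarrow> strict_mono_on {0<..} (gfun a)"
  unfolding gfun_def by (rule strict_mono_onI) (smt (verit) divide_left_mono mult_pos_pos greaterThan_iff)

lemma gfun_less: "a \<le> 1 \<Longrightarrow> 0 < s \<Longrightarrow> s < t \<Longrightarrow> gfun a s < gfun a t"
  using strict_mono_onD[OF strict_mono_on_gfun] by simp

lemma gfun_le: "a \<le> 1 \<Longrightarrow> 0 < s \<Longrightarrow> s \<le> t \<Longrightarrow> gfun a s \<le> gfun a t"
  using strict_mono_on_leD[OF strict_mono_on_gfun] by simp

lemma gfun_root_le:
  assumes "a \<le> 1" and L: "0 < L" and b: "b \<le> gfun a L"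
  shows "gfun_root a b \<le> L"
proof -
  have q: "0 \<le> L * L - b * L - (1 - a)" using b L by (simp add: gfun_def field_simps)
  then have "0 \<le> L * (L - b)" using \<open>a \<le> 1\<close> by (simp add: algebra_simps)
  then have "0 \<le> 2 * L - b" using L by (simp add: zero_le_mult_iff)
  moreover have "b\<^sup>2 + 4 * (1 - a) \<le> (2 * L - b)\<^sup>2" using q by (simp add: power2_eq_square algebra_simps)
  ultimately have "sqrt (b\<^sup>2 + 4 * (1 - a)) \<le> 2 * L - b" by (simp add: real_le_lsqrt)
  then show ?thesis by (simp add: gfun_root_def)
qed

lemma gfun_root_gfun:
  assumes "a \<le> 1" and L: "0 < L"
  shows "gfun_root a (gfun a L) = L"
proof -
  define b where "b = gfun a L"
  have q: "0 = L * L - b * L - (1 - a)" using L by (simp add: b_def gfun_def field_simps)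
  then have "0 \<le> L * (L - b)" using \<open>a \<le> 1\<close> by (simp add: algebra_simps)
  then have "0 \<le> 2 * L - b" using L by (simp add: zero_le_mult_iff)
  moreover have "b\<^sup>2 + 4 * (1 - a) = (2 * L - b)\<^sup>2" using q by (simp add: power2_eq_square algebra_simps)
  ultimately have "sqrt (b\<^sup>2 + 4 * (1 - a)) = 2 * L - b" by simp
  then show ?thesis by (simp add: gfun_root_def b_def)
qed

lemma gfun_inverse_le_max:
  assumes "1 \<le> q" "q \<le> x"
  shows "a * q + gfun a (1 / q) \<le> max (2 * a) (a * x + gfun a (1 / x))"
proof -
  have r: "a * t + gfun a (1 / t) = (2 * a - 1) * t + inverse t" if "0 < t" for t
    using that by (simp add: gfun_def field_simps)
  have "convex_on {1..x} (\<lambda>t. (2 * a - 1) * t)"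
    by (rule convex_on_linorderI) (auto simp: algebra_simps)
  then have "convex_on {1..x} (\<lambda>t. (2 * a - 1) * t + inverse t)"
    by (rule convex_on_add[OF _ convex_on_inverse]) auto
  then have "(2 * a - 1) * q + inverse q \<le> max (2 * a) ((2 * a - 1) * x + inverse x)"
    using convex_on_le_max[of 1 x "\<lambda>t. (2 * a - 1) * t + inverse t" q] assms by simp
  then show ?thesis using r[of q] r[of x] assms by simp
qed

lemma finf_eq_max_gfun_root: "finf a x = max (1 / x) (gfun_root a (a * (2 - x)))"
  by (simp add: finf_def gfun_root_def power_mult_distrib)

lemma Fseq_eq_gfun: "Fseq a k y = 1 / y - y + gfun a (fseq a k (1 / y))"
  by (simp add: Fseq_def gfun_def)

lemma Fseq_add_gfun: "Fseq a k y + gfun a y = Hseq a k (1 / y)"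
  by (simp add: Fseq_eq_gfun Hseq_def gfun_def diff_divide_distrib)

definition regular :: "real \<Rightarrow> nat \<Rightarrow> bool" where
  "regular a k \<longleftrightarrow> (\<forall>x\<ge>1. 0 < fseq a k x \<and> fseq a k x \<le> 1) \<and> fseq a k 1 = 1
     \<and> (\<forall>x>1. 1 / x < fseq a k x) \<and> smooth_on {1..} (fseq a k) \<and> mono_on {1..} (Hseq a k)"

lemma regular_0: "0 \<le> a \<Longrightarrow> regular a 0"
  unfolding regular_def Hseq_def by (auto simp: smooth_on_const intro!: mono_onI mult_left_mono)

locale fseq_param =
  fixes a :: real
  assumes a_pos: "0 < a" and a_le_1: "a \<le> 1"

locale fseq_step = fseq_param +
  fixes k :: nat
  assumes regular: "regular a k"
begin

lemma fseq_pos: "1 \<le> x \<Longrightarrow> 0 < fseq a k x"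
  using regular by (simp add: regular_def)

lemma fseq_le_1: "1 \<le> x \<Longrightarrow> fseq a k x \<le> 1"
  using regular by (simp add: regular_def)

lemma fseq_at_1: "fseq a k 1 = 1"
  using regular by (simp add: regular_def)

lemma fseq_gt_inverse: "1 < x \<Longrightarrow> 1 / x < fseq a k x"
  using regular by (simp add: regular_def)

lemma fseq_ge_inverse: "1 \<le> x \<Longrightarrow> 1 / x \<le> fseq a k x"
  using fseq_gt_inverse[of x] fseq_at_1 by (cases "x = 1") auto

lemma smooth_on_fseq: "smooth_on {1..} (fseq a k)"
  using regular by (simp add: regular_def)

lemma Hseq_mono: "1 \<le> x \<Longrightarrow> x \<le> y \<Longrightarrow> Hseq a k x \<le> Hseq a k y"
  using regular by (auto simp: regular_def intro: mono_onD)

lemma Fseq_at_1: "Fseq a k 1 = a"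
  by (simp add: Fseq_eq_gfun fseq_at_1)

lemma Fseq_strict_antimono:
  assumes "0 < y" "y < z" "z \<le> 1"
  shows "Fseq a k z < Fseq a k y"
proof -
  have "Hseq a k (1 / z) \<le> Hseq a k (1 / y)"
    using assms by (intro Hseq_mono) (auto simp: frac_le)
  moreover have "gfun a y < gfun a z" using assms a_le_1 by (intro gfun_less) auto
  ultimately show ?thesis using Fseq_add_gfun[of a k y] Fseq_add_gfun[of a k z] by linarith
qed

lemma Fseq_less_iff:
  assumes "0 < y" "y \<le> 1" "0 < z" "z \<le> 1"
  shows "Fseq a k z < Fseq a k y \<longleftrightarrow> y < z"
  using Fseq_strict_antimono[of y z] Fseq_strict_antimono[of z y] assms by (cases y z rule: linorder_cases) auto

lemma Fseq_inj:
  assumes "0 < y" "y \<le> 1" "0 < z" "z \<le> 1" "Fseq a k y = Fseq a k z"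
  shows "y = z"
  using Fseq_less_iff[of y z] Fseq_less_iff[of z y] assms by (cases y z rule: linorder_cases) auto

lemma Fseq_minus_gfun: "Fseq a k y - a / y = gfun a (fseq a k (1 / y)) - gfun a y"
  by (simp add: Fseq_eq_gfun gfun_def diff_divide_distrib)

lemma Fseq_lower_bound:
  assumes "0 < y" "y \<le> 1"
  shows "a / y \<le> Fseq a k y"
  using gfun_le[OF a_le_1 _ fseq_ge_inverse[of "1 / y"]] Fseq_minus_gfun[of y] assms by simp

lemma Fseq_lower_bound_strict:
  assumes "0 < y" "y < 1"
  shows "a / y < Fseq a k y"
  using gfun_less[OF a_le_1 _ fseq_gt_inverse[of "1 / y"]] Fseq_minus_gfun[of y] assms by simp

lemma Fseq_upper_bound:
  assumes "0 < y" "y \<le> 1"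
  shows "Fseq a k y \<le> 1 / y + a"
proof -
  have "gfun a (fseq a k (1 / y)) \<le> gfun a 1"
    using assms by (intro gfun_le a_le_1 fseq_pos fseq_le_1) auto
  then show ?thesis using assms by (simp add: Fseq_eq_gfun)
qed

lemma smooth_on_Fseq: "smooth_on {0<..1} (Fseq a k)"
proof -
  have "((\<lambda>y. 1 / y) has_real_derivative -1 * (1 / y * (1 / y))) (at y within {0<..1})"
    if "y \<in> {0<..1}" for y
    using that by (auto intro!: derivative_eq_intros simp: field_simps)
  moreover have "smooth_on {1..} (\<lambda>t. -1 * (t * t))"
    by (intro smooth_on_mult smooth_on_const smooth_on_id)
  ultimately have f: "smooth_on {0<..1} (\<lambda>y. fseq a k (1 / y))"
    using smooth_on_compose_ode[where S = "{0<..1}" and T = "{1..}" and u = "\<lambda>y. 1 / y"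
        and w = "\<lambda>t. -1 * (t * t)" and \<phi> = "fseq a k"] smooth_on_fseq
    by simp
  have "smooth_on {0<..1} (\<lambda>y. 1 / y - y - (1 - a) / fseq a k (1 / y) + fseq a k (1 / y))"
    by (intro smooth_on_add smooth_on_diff smooth_on_divide smooth_on_const smooth_on_id f)
       (auto intro!: fseq_pos[THEN less_imp_neq, symmetric])
  then show ?thesis by (simp add: Fseq_def[abs_def])
qed

lemma Fseq_tendsto_at_right_0: "filterlim (Fseq a k) at_top (at_right 0)"
proof (rule filterlim_at_top_mono)
  show "filterlim (\<lambda>y. a * inverse y) at_top (at_right 0)"
    by (rule filterlim_tendsto_pos_mult_at_top[OF tendsto_const a_pos filterlim_inverse_at_top_right])
  show "eventually (\<lambda>y. a * inverse y \<le> Fseq a k y) (at_right 0)"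
    by (rule eventually_at_rightI[of 0 1]) (auto simp: Fseq_lower_bound divide_inverse[symmetric])
qed

text \<open>\<open>F\<^sub>k(y) + y = H\<^sub>k(1/y) + (1 - a)/y\<close> is non-increasing, so \<open>F\<^sub>k' \<le> -1\<close>.\<close>
lemma Fseq_derivative_le:
  "\<exists>F'. (\<forall>y\<in>{0<..1}. (Fseq a k has_real_derivative F' y) (at y within {0<..1}))
    \<and> smooth_on {0<..1} F' \<and> (\<forall>y\<in>{0<..1}. F' y \<le> -1)"
proof -
  obtain F' where dF: "\<forall>y\<in>{0<..1}. (Fseq a k has_real_derivative F' y) (at y within {0<..1})"
    and "smooth_on {0<..1} F'"
    using smooth_on_Fseq unfolding smooth_on_iff_derivative[of _ "Fseq a k"] by blast
  have dec: "Fseq a k z + z \<le> Fseq a k y + y" if "y \<in> {0<..1}" "z \<in> {0<..1}" "y \<le> z" for y z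
  proof -
    have eq: "Fseq a k t + t = Hseq a k (1 / t) + (1 - a) / t" for t
      using Fseq_add_gfun[of a k t] by (simp add: gfun_def)
    have "Hseq a k (1 / z) \<le> Hseq a k (1 / y)"
      using that by (intro Hseq_mono) (auto simp: frac_le)
    moreover have "(1 - a) / z \<le> (1 - a) / y"
      using that a_le_1 by (intro divide_left_mono) auto
    ultimately show ?thesis using eq[of y] eq[of z] by linarith
  qed
  have "F' y + 1 \<le> 0" if "y \<in> {0<..1}" for y
  proof (rule decreasing_imp_DERIV_nonpos[where S = "{0<..1}"])
    show "((\<lambda>z. Fseq a k z + z) has_real_derivative F' y + 1) (at y within {0<..1})"
      using dF that by (intro DERIV_add DERIV_ident) auto
    show "at y within {0<..1} \<noteq> bot" using that by (simp add: trivial_limit_within)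
  qed (use that dec in auto)
  with dF \<open>smooth_on {0<..1} F'\<close> show ?thesis by force
qed

lemma Fseq_eq_imp_fseq_Suc:
  assumes "0 < y" "y \<le> 1" "Fseq a k y = a * x"
  shows "fseq a (Suc k) x = y"
  unfolding fseq_Suc
proof (rule Greatest_equality)
  show "0 < y \<and> y \<le> 1 \<and> Fseq a k y = a * x" using assms by simp
  show "z \<le> y" if "0 < z \<and> z \<le> 1 \<and> Fseq a k z = a * x" for z
    using Fseq_inj[of z y] that assms by simp
qed

lemma Fseq_fseq_Suc:
  assumes "1 \<le> x"
  shows "1 / x \<le> fseq a (Suc k) x" and "fseq a (Suc k) x \<le> 1"
    and "Fseq a k (fseq a (Suc k) x) = a * x"
proof -
  have "{1 / x..1} \<subseteq> {0<..1}"
  proof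
    fix z assume z: "z \<in> {1 / x..1}"
    have "0 < 1 / x" using assms by simp
    also have "1 / x \<le> z" using z by simp
    finally show "z \<in> {0<..1}" using z by simp
  qed
  then have "continuous_on {1 / x..1} (Fseq a k)"
    by (rule continuous_on_subset[OF smooth_on_continuous[OF smooth_on_Fseq]])
  moreover have "Fseq a k 1 \<le> a * x" and "a * x \<le> Fseq a k (1 / x)"
    using assms Fseq_at_1 Fseq_lower_bound[of "1 / x"] a_pos by auto
  ultimately obtain y where y: "1 / x \<le> y" "y \<le> 1" "Fseq a k y = a * x"
    using IVT2'[of "Fseq a k" 1 "a * x" "1 / x"] assms by auto
  moreover have "0 < y" using y(1) assms by (smt (verit) divide_pos_pos)
  ultimately have "fseq a (Suc k) x = y" by (intro Fseq_eq_imp_fseq_Suc) auto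
  with y show "1 / x \<le> fseq a (Suc k) x" "fseq a (Suc k) x \<le> 1"
    "Fseq a k (fseq a (Suc k) x) = a * x" by simp_all
qed

lemma fseq_Suc_pos: "1 \<le> x \<Longrightarrow> 0 < fseq a (Suc k) x"
  using Fseq_fseq_Suc(1)[of x] by (smt (verit) divide_pos_pos)

lemma Fseq_greatest_solution:
  assumes "1 \<le> x"
  shows "\<exists>y. (0 < y \<and> y \<le> 1 \<and> Fseq a k y = a * x) \<and>
    (\<forall>z. 0 < z \<and> z \<le> 1 \<and> Fseq a k z = a * x \<longrightarrow> z \<le> y)"
  using Fseq_fseq_Suc[OF assms] fseq_Suc_pos[OF assms] Fseq_inj by (intro exI[of _ "fseq a (Suc k) x"]) force

lemma fseq_Suc_at_1: "fseq a (Suc k) 1 = 1"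
  using Fseq_eq_imp_fseq_Suc[of 1 1] Fseq_at_1 by simp

lemma fseq_Suc_less_1:
  assumes "1 < x"
  shows "fseq a (Suc k) x < 1"
proof -
  have "fseq a (Suc k) x \<noteq> 1"
    using Fseq_fseq_Suc(3)[of x] Fseq_at_1 assms a_pos by auto
  then show ?thesis using Fseq_fseq_Suc(2)[of x] assms by simp
qed

lemma fseq_Suc_strict_antimono:
  assumes "1 \<le> x" "x < y"
  shows "fseq a (Suc k) y < fseq a (Suc k) x"
proof -
  have "Fseq a k (fseq a (Suc k) x) < Fseq a k (fseq a (Suc k) y)"
    using Fseq_fseq_Suc(3) assms a_pos by simp
  then show ?thesis
    using Fseq_less_iff fseq_Suc_pos Fseq_fseq_Suc(2) assms by simp
qed

lemma fseq_Suc_gt_inverse: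
  assumes "1 < x"
  shows "1 / x < fseq a (Suc k) x"
proof -
  let ?y = "fseq a (Suc k) x"
  have "0 < ?y" "?y < 1" using fseq_Suc_pos fseq_Suc_less_1 assms by simp_all
  then have "a / ?y < a * x" using Fseq_lower_bound_strict[of ?y] Fseq_fseq_Suc(3)[of x] assms by simp
  then show ?thesis using \<open>0 < ?y\<close> a_pos assms by (simp add: field_simps)
qed

lemma fseq_Suc_tendsto_0: "(fseq a (Suc k) \<longlongrightarrow> 0) at_top"
proof -
  have "a * x - a \<le> 1 / fseq a (Suc k) x" if "1 \<le> x" for x
    using Fseq_upper_bound[of "fseq a (Suc k) x"] Fseq_fseq_Suc(2,3)[OF that] fseq_Suc_pos[OF that] by simp
  then have "filterlim (\<lambda>x. 1 / fseq a (Suc k) x) at_top at_top"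
    by (intro filterlim_at_top_mono[OF filterlim_tendsto_add_at_top[OF tendsto_const
          filterlim_tendsto_pos_mult_at_top[OF tendsto_const a_pos filterlim_ident]],
          of "- a"])
       (auto intro: eventually_mono[OF eventually_ge_at_top[of 1]])
  then have "((\<lambda>x. inverse (1 / fseq a (Suc k) x)) \<longlongrightarrow> 0) at_top"
    by (rule tendsto_inverse_0_at_top)
  then show ?thesis by simp
qed

lemma fseq_Suc_tendsto_at_1: "(fseq a (Suc k) \<longlongrightarrow> 1) (at 1 within {1..})"
proof -
  have lim: "((\<lambda>t::real. 1 / t) \<longlongrightarrow> 1) (at 1 within {1..})"
    using tendsto_inverse[OF tendsto_ident_at, of "1::real" "{1..}"] by (simp add: inverse_eq_divide)
  show ?thesis
  proof (rule tendsto_sandwich[OF _ _ lim tendsto_const])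
    show "\<forall>\<^sub>F t in at 1 within {1..}. 1 / t \<le> fseq a (Suc k) t"
      unfolding eventually_at_filter by (rule always_eventually) (simp add: Fseq_fseq_Suc(1))
    show "\<forall>\<^sub>F t in at 1 within {1..}. fseq a (Suc k) t \<le> 1"
      unfolding eventually_at_filter by (rule always_eventually) (simp add: Fseq_fseq_Suc(2))
  qed
qed

lemma isCont_fseq_Suc:
  assumes "1 < x"
  shows "isCont (fseq a (Suc k)) x"
proof -
  define y where "y = fseq a (Suc k) x"
  have y: "0 < y" "y < 1" using fseq_Suc_pos fseq_Suc_less_1 assms by (simp_all add: y_def)
  have cont: "isCont (\<lambda>z. Fseq a k z / a) z" if "z \<in> {0<..<1}" for z
  proof -
    have "continuous_on {0<..<1} (Fseq a k)"
      using smooth_on_continuous[OF smooth_on_Fseq] by (rule continuous_on_subset) auto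
    then have "isCont (Fseq a k) z" using that by (simp add: continuous_on_eq_continuous_at)
    then show ?thesis using a_pos by (intro continuous_intros) auto
  qed
  have "isCont (fseq a (Suc k)) (Fseq a k y / a)"
  proof (rule isCont_inverse_function2[where f = "\<lambda>z. Fseq a k z / a" and x = y
        and a = "y / 2" and b = "(1 + y) / 2"])
    show "fseq a (Suc k) (Fseq a k z / a) = z" if "y / 2 \<le> z" "z \<le> (1 + y) / 2" for z
      using that y a_pos by (intro Fseq_eq_imp_fseq_Suc) auto
    show "isCont (\<lambda>z. Fseq a k z / a) z" if "y / 2 \<le> z" "z \<le> (1 + y) / 2" for z
      using that y by (intro cont) auto
  qed (use y in auto)
  moreover have "Fseq a k y / a = x" using Fseq_fseq_Suc(3)[of x] assms a_pos by (simp add: y_def)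
  ultimately show ?thesis by simp
qed

lemma continuous_on_fseq_Suc: "continuous_on {1..} (fseq a (Suc k))"
  unfolding continuous_on_eq_continuous_within
proof
  fix x :: real assume "x \<in> {1..}"
  then consider "x = 1" | "1 < x" by fastforce
  then show "continuous (at x within {1..}) (fseq a (Suc k))"
  proof cases
    case 1
    then show ?thesis using fseq_Suc_tendsto_at_1 by (simp add: continuous_within fseq_Suc_at_1)
  next
    case 2
    then show ?thesis using isCont_fseq_Suc by (simp add: continuous_at_imp_continuous_at_within)
  qed
qed

text \<open>\<open>f\<^sub>k\<^sub>+\<^sub>1\<close> is the inverse function of \<open>F\<^sub>k / a\<close>.\<close>
lemma smooth_on_fseq_Suc: "smooth_on {1..} (fseq a (Suc k))"
proof -
  obtain F' where dF: "\<And>y. y \<in> {0<..1} \<Longrightarrow> (Fseq a k has_real_derivative F' y) (at y within {0<..1})"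
    and "smooth_on {0<..1} F'" and F'_le: "\<And>y. y \<in> {0<..1} \<Longrightarrow> F' y \<le> -1"
    using Fseq_derivative_le by blast
  show ?thesis
  proof (rule smooth_on_inverse_function[where T = "{0<..1}" and G = "\<lambda>y. Fseq a k y / a"])
    show "smooth_on {0<..1} (\<lambda>y. F' y / a)"
      by (rule smooth_on_divide[OF \<open>smooth_on {0<..1} F'\<close> smooth_on_const]) (use a_pos in simp)
    show "((\<lambda>y. Fseq a k y / a) has_real_derivative F' y / a) (at y within {0<..1})"
      if "y \<in> {0<..1}" for y
      using dF[OF that] by (rule DERIV_cdivide)
    show "F' y / a \<noteq> 0" if "y \<in> {0<..1}" for y
      using F'_le[OF that] a_pos by simp
    show "fseq a (Suc k) x \<in> {0<..1}" "Fseq a k (fseq a (Suc k) x) / a = x" if "x \<in> {1..}" for x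
      using that fseq_Suc_pos Fseq_fseq_Suc(2,3) a_pos by auto
  qed (rule continuous_on_fseq_Suc)
qed

lemma Hseq_Suc: "1 \<le> x \<Longrightarrow> Hseq a (Suc k) x = Hseq a k (1 / fseq a (Suc k) x)"
  using Fseq_add_gfun[of a k "fseq a (Suc k) x"] Fseq_fseq_Suc(3)[of x] by (simp add: Hseq_def)

lemma regular_Suc: "regular a (Suc k)"
  unfolding regular_def
proof (intro conjI allI impI mono_onI)
  fix x y :: real
  assume "x \<in> {1..}" "y \<in> {1..}" "x \<le> y"
  then have "1 / fseq a (Suc k) x \<le> 1 / fseq a (Suc k) y"
    using fseq_Suc_strict_antimono[of x y] fseq_Suc_pos[of y]
    by (cases "x = y") (auto intro: frac_le)
  moreover have "1 \<le> 1 / fseq a (Suc k) x"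
    using Fseq_fseq_Suc(2) fseq_Suc_pos \<open>x \<in> {1..}\<close> by simp
  ultimately show "Hseq a (Suc k) x \<le> Hseq a (Suc k) y"
    using Hseq_Suc \<open>x \<in> {1..}\<close> \<open>y \<in> {1..}\<close> Hseq_mono by simp
qed (use fseq_Suc_pos Fseq_fseq_Suc(2) fseq_Suc_at_1 fseq_Suc_gt_inverse smooth_on_fseq_Suc in auto)

end

context fseq_param
begin

lemma regular_all: "regular a k"
proof (induction k)
  case 0
  show ?case using a_pos by (intro regular_0) simp
next
  case (Suc k)
  then interpret fseq_step a k by unfold_locales
  show ?case by (rule regular_Suc)
qed

end

sublocale fseq_param \<subseteq> fseq_step a k for k
  by unfold_locales (rule regular_all)

context fseq_param
begin

lemma fseq_Suc_less: "1 < x \<Longrightarrow> fseq a (Suc k) x < fseq a k x"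
proof (induction k arbitrary: x)
  case 0
  then show ?case using fseq_Suc_less_1 by simp
next
  case (Suc k)
  define y where "y = fseq a (Suc (Suc k)) x"
  have y: "0 < y" "y < 1" using fseq_Suc_pos fseq_Suc_less_1 Suc.prems by (simp_all add: y_def)
  then have "1 < 1 / y" by simp
  from Suc.IH[OF this] have "Fseq a (Suc k) y < Fseq a k y"
    using fseq_pos[of "1 / y" "Suc k"] \<open>1 < 1 / y\<close> by (simp add: Fseq_eq_gfun gfun_less a_le_1)
  then have "Fseq a k (fseq a (Suc k) x) < Fseq a k y"
    using Fseq_fseq_Suc(3) Suc.prems by (simp add: y_def)
  then show ?case
    using Fseq_less_iff y fseq_Suc_pos Fseq_fseq_Suc(2) Suc.prems by (simp add: y_def)
qed

lemma fseq_strict_antimono: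
  assumes "1 \<le> k" "1 \<le> x" "x < y"
  shows "fseq a k y < fseq a k x"
proof -
  obtain j where "k = Suc j" using assms(1) by (cases k) auto
  then show ?thesis using fseq_Suc_strict_antimono assms(2,3) by simp
qed

lemma fseq_tendsto_0: "1 \<le> k \<Longrightarrow> (fseq a k \<longlongrightarrow> 0) at_top"
  using fseq_Suc_tendsto_0 by (cases k) auto

end

section \<open>The pointwise limit\<close>

context fseq_param
begin

lemma decseq_fseq:
  assumes "1 \<le> x"
  shows "decseq (\<lambda>k. fseq a k x)"
proof (rule decseq_SucI)
  fix k
  show "fseq a (Suc k) x \<le> fseq a k x"
    using fseq_Suc_less[of x k] fseq_at_1 assms by (cases "x = 1") auto
qed

definition flim :: "real \<Rightarrow> real" where
  "flim x = lim (\<lambda>k. fseq a k x)"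

lemma fseq_tendsto_flim:
  assumes "1 \<le> x"
  shows "(\<lambda>k. fseq a k x) \<longlonglongrightarrow> flim x"
proof -
  have "\<forall>k. 0 \<le> fseq a k x" using fseq_pos assms less_imp_le by blast
  then obtain L where "(\<lambda>k. fseq a k x) \<longlonglongrightarrow> L"
    using decseq_convergent[OF decseq_fseq[OF assms]] by blast
  then show ?thesis by (simp add: flim_def limI)
qed

lemma flim_le_fseq: "1 \<le> x \<Longrightarrow> flim x \<le> fseq a k x"
  by (rule decseq_ge[OF decseq_fseq fseq_tendsto_flim])

lemma flim_ge_inverse: "1 \<le> x \<Longrightarrow> 1 / x \<le> flim x"
  by (rule LIMSEQ_le_const[OF fseq_tendsto_flim]) (auto intro: fseq_ge_inverse)

lemma flim_pos: "1 \<le> x \<Longrightarrow> 0 < flim x"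
  using flim_ge_inverse[of x] by (smt (verit) divide_pos_pos)

lemma inverse_flim_bounds: "1 \<le> x \<Longrightarrow> 1 \<le> 1 / flim x \<and> 1 / flim x \<le> x"
  using flim_le_fseq[of x 0] flim_ge_inverse[of x] flim_pos[of x]
  by (simp add: le_divide_eq divide_le_eq mult.commute)

definition Hlim :: "real \<Rightarrow> real" where
  "Hlim x = a * x + gfun a (flim x)"

lemma Hseq_tendsto_Hlim:
  assumes "1 \<le> x"
  shows "(\<lambda>k. Hseq a k x) \<longlonglongrightarrow> Hlim x"
  unfolding Hseq_def Hlim_def gfun_def
  using fseq_tendsto_flim[OF assms] flim_pos[OF assms] by (intro tendsto_intros) auto

lemma Hlim_mono: "1 \<le> x \<Longrightarrow> x \<le> y \<Longrightarrow> Hlim x \<le> Hlim y"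
  by (rule LIMSEQ_le[OF Hseq_tendsto_Hlim Hseq_tendsto_Hlim]) (auto intro: Hseq_mono)

lemma Hlim_1: "Hlim 1 = 2 * a"
  using flim_le_fseq[of 1 0] flim_ge_inverse[of 1] by (simp add: Hlim_def)

lemma Hlim_ge: "1 \<le> x \<Longrightarrow> max (2 * a) (a * x + gfun a (1 / x)) \<le> Hlim x"
  using Hlim_mono[of 1 x] Hlim_1 gfun_le[OF a_le_1 _ flim_ge_inverse, of x]
  by (simp add: Hlim_def)

text \<open>Passes \<open>H\<^sub>k\<^sub>+\<^sub>1(x) = H\<^sub>k(1 / f\<^sub>k\<^sub>+\<^sub>1(x))\<close> to the limit.\<close>
lemma Hlim_inverse_flim:
  assumes "1 \<le> x"
  shows "Hlim (1 / flim x) = Hlim x"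
proof (rule antisym)
  show "Hlim (1 / flim x) \<le> Hlim x" using inverse_flim_bounds[OF assms] by (intro Hlim_mono) auto
  show "Hlim x \<le> Hlim (1 / flim x)"
  proof (rule LIMSEQ_le)
    show "(\<lambda>k. Hseq a (Suc k) x) \<longlonglongrightarrow> Hlim x"
      using Hseq_tendsto_Hlim[OF assms] by (rule LIMSEQ_Suc)
    show "(\<lambda>k. Hseq a k (1 / flim x)) \<longlonglongrightarrow> Hlim (1 / flim x)"
      using inverse_flim_bounds[OF assms] by (intro Hseq_tendsto_Hlim) simp
    have "Hseq a (Suc k) x \<le> Hseq a k (1 / flim x)" for k
    proof -
      have "1 / fseq a (Suc k) x \<le> 1 / flim x"
        using flim_le_fseq[OF assms] flim_pos[OF assms] fseq_Suc_pos[OF assms]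
        by (intro divide_left_mono) auto
      moreover have "1 \<le> 1 / fseq a (Suc k) x"
        using Fseq_fseq_Suc(2)[OF assms] fseq_Suc_pos[OF assms] by simp
      ultimately show ?thesis using Hseq_Suc[OF assms] Hseq_mono by simp
    qed
    then show "\<exists>N. \<forall>k\<ge>N. Hseq a (Suc k) x \<le> Hseq a k (1 / flim x)" by blast
  qed
qed

text \<open>Let \<open>q\<close> be the infimum of the level set \<open>\<Lambda>\<close> of \<open>H\<^sub>\<infinity>\<close> through \<open>x\<close>. Since \<open>\<Lambda>\<close> is closed under
  \<open>y \<mapsto> 1 / f\<^sub>\<infinity>(y) \<ge> q\<close>, every \<open>y \<in> \<Lambda>\<close> satisfies \<open>H\<^sub>\<infinity>(x) = a y + g(f\<^sub>\<infinity>(y)) \<le> a y + g(1 / q)\<close>,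
  hence \<open>H\<^sub>\<infinity>(x) \<le> a q + g(1 / q)\<close>.\<close>
lemma Hlim_le:
  assumes "1 \<le> x"
  shows "Hlim x \<le> max (2 * a) (a * x + gfun a (1 / x))"
proof -
  define \<Lambda> where "\<Lambda> = {y. 1 \<le> y \<and> Hlim y = Hlim x}"
  define q where "q = Inf \<Lambda>"
  have x: "x \<in> \<Lambda>" using assms by (simp add: \<Lambda>_def)
  have bdd: "bdd_below \<Lambda>" unfolding \<Lambda>_def by (rule bdd_belowI[of _ 1]) auto
  have q1: "1 \<le> q" unfolding q_def using x by (intro cInf_greatest) (auto simp: \<Lambda>_def)
  have "Hlim x - gfun a (1 / q) \<le> a * y" if "y \<in> \<Lambda>" for y
  proof -
    have y: "1 \<le> y" "Hlim y = Hlim x" using that by (simp_all add: \<Lambda>_def)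
    then have "1 / flim y \<in> \<Lambda>"
      using Hlim_inverse_flim inverse_flim_bounds by (simp add: \<Lambda>_def)
    then have "q \<le> 1 / flim y" unfolding q_def using bdd by (rule cInf_lower)
    then have "flim y \<le> 1 / q" using flim_pos[OF y(1)] q1 by (simp add: le_divide_eq mult.commute)
    then have "gfun a (flim y) \<le> gfun a (1 / q)" using flim_pos[OF y(1)] a_le_1 by (intro gfun_le)
    then show ?thesis using y by (simp add: Hlim_def)
  qed
  then have "(Hlim x - gfun a (1 / q)) / a \<le> q"
    unfolding q_def using x a_pos by (intro cInf_greatest) (auto simp: divide_le_eq mult.commute)
  then have "Hlim x \<le> a * q + gfun a (1 / q)" using a_pos by (simp add: divide_le_eq mult.commute)
  also have "\<dots> \<le> max (2 * a) (a * x + gfun a (1 / x))"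
    using q1 x bdd by (intro gfun_inverse_le_max) (auto simp: q_def cInf_lower)
  finally show ?thesis .
qed

lemma gfun_flim:
  assumes "1 \<le> x"
  shows "gfun a (flim x) = max (a * (2 - x)) (gfun a (1 / x))"
proof -
  have "gfun a (flim x) = max (2 * a) (a * x + gfun a (1 / x)) - a * x"
    using antisym[OF Hlim_le Hlim_ge, OF assms assms] by (simp add: Hlim_def)
  also have "\<dots> = max (a * (2 - x)) (gfun a (1 / x))"
    by (simp add: max_diff_distrib_left algebra_simps)
  finally show ?thesis .
qed

lemma flim_eq_finf:
  assumes "1 \<le> x"
  shows "flim x = finf a x"
proof (cases "gfun a (1 / x) \<le> a * (2 - x)")
  case True
  then have "flim x = gfun_root a (a * (2 - x))"
    using gfun_flim[OF assms] gfun_root_gfun[OF a_le_1 flim_pos[OF assms]] by simp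
  then show ?thesis using flim_ge_inverse[OF assms] by (simp add: finf_eq_max_gfun_root)
next
  case False
  then have "gfun a (flim x) = gfun a (1 / x)" using gfun_flim[OF assms] by simp
  then have "flim x = 1 / x"
    using strict_mono_on_eqD[OF strict_mono_on_gfun[OF a_le_1]] flim_pos[OF assms] assms by simp
  moreover have "gfun_root a (a * (2 - x)) \<le> 1 / x"
    using False assms a_le_1 by (intro gfun_root_le) auto
  ultimately show ?thesis by (simp add: finf_eq_max_gfun_root)
qed

lemma fseq_tendsto_finf: "1 \<le> x \<Longrightarrow> (\<lambda>k. fseq a k x) \<longlonglongrightarrow> finf a x"
  using fseq_tendsto_flim flim_eq_finf by simp

end

theorem proposition1:
  fixes a :: real
  assumes "0 < a" and "a \<le> 1"
  shows
    \<comment> \<open>well-definedness: the maximum defining f_{k+1} x exists\<close>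
    "(\<forall>k. \<forall>x\<ge>1. \<exists>y. (0 < y \<and> y \<le> 1 \<and> Fseq a k y = a * x) \<and>
        (\<forall>z. 0 < z \<and> z \<le> 1 \<and> Fseq a k z = a * x \<longrightarrow> z \<le> y))
   \<and> \<comment> \<open>(a)\<close>
    (\<forall>k\<ge>1. (\<forall>x\<ge>1. \<forall>y\<ge>1. x < y \<longrightarrow> fseq a k y < fseq a k x)
        \<and> smooth_on {1..} (fseq a k)
        \<and> fseq a k 1 = 1
        \<and> (fseq a k \<longlongrightarrow> 0) at_top
        \<and> (\<forall>x>1. fseq a k x > 1 / x))
   \<and> \<comment> \<open>(b)\<close>
    (\<forall>k. (\<forall>x\<in>{0<..1}. \<forall>y\<in>{0<..1}. x < y \<longrightarrow> Fseq a k y < Fseq a k x)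
        \<and> smooth_on {0<..1} (Fseq a k)
        \<and> filterlim (Fseq a k) at_top (at_right 0)
        \<and> Fseq a k 1 = a)
   \<and> \<comment> \<open>(c)\<close>
    (\<forall>k. \<forall>x>1. fseq a (Suc k) x < fseq a k x)
   \<and> \<comment> \<open>(d)\<close>
    (\<forall>x\<ge>1. (\<lambda>k. fseq a k x) \<longlonglongrightarrow> finf a x)"
proof -
  interpret fseq_param a using assms by unfold_locales
  show ?thesis
    using Fseq_greatest_solution fseq_strict_antimono smooth_on_fseq fseq_at_1 fseq_tendsto_0
      fseq_gt_inverse Fseq_strict_antimono smooth_on_Fseq Fseq_tendsto_at_right_0 Fseq_at_1
      fseq_Suc_less fseq_tendsto_finf
    by auto
qed

end
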